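(* Fix $n\ge1$, $\theta\in(1/2,7/8]$, $h_1\in[0,1]$, $\alpha\in[0,1]$, an integer $k\ge1$ and $[\underline h,\bar h]\subset(0,1)$. Fix any realization of the couplings $J_X\ge0$ (so that both GKS inequalities hold). Then $$\int_{\underline h}^{\bar h}dh_0\,\mathbb E_{\boldsymbol\tau}\big[(\langle Q_k\rangle_{h_0,h_1,\alpha}-\mathbb E_{\boldsymbol\tau}\langle Q_k\rangle_{h_0,h_1,\alpha})^2\big]\le\frac{\alpha kh_1}{n^{1-\theta}}.$$
   Context: Spins $\boldsymbol\sigma\in\{-1,1\}^n$, $\sigma_X=\prod_{i\in X}\sigma_i$. $\tau_1,\dots,\tau_n$ are i.i.d. Poisson with mean $\alpha n^{\theta-1}$, and $\mathbb E_{\boldsymbol\tau}$ denotes expectation over $\boldsymbol\tau$ only. Hamiltonian $\mathcal H(\boldsymbol\sigma)=-\sum_{X\subset\{1,\dots,n\}}J_X\sigma_X-h_0\sum_i\sigma_i-h_1\sum_i\tau_i\sigma_i$, Gibbs expectation $\langle\cdot\rangle_{h_0,h_1,\alpha}$; for $k$ replicas, $\langle\cdot\rangle$ is the expectation under the product of $k$ independent copies of the Gibbs measure. $Q_k=\frac1n\sum_i\sigma_i^{(1)}\cdots\sigma_i^{(k)}$, so $\langle Q_k\rangle=\frac1n\sum_i\langle\sigma_i\rangle^k$. GKS inequalities: $\langle\sigma_T\rangle\ge0$ and $\langle\sigma_T\sigma_S\rangle-\langle\sigma_T\rangle\langle\sigma_S\rangle\ge0$ for all $T,S\subset\{1,\dots,n\}$.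 *)

theory Defs
  imports "HOL-Analysis.Analysis" "HOL-Probability.Probability"
begin

text \<open>Spin configurations on sites 0..n-1 (indices shifted from 1..n), values in {-1,1}.\<close>
definition spins :: "nat \<Rightarrow> (nat \<Rightarrow> real) set" where
  "spins n = PiE {0..<n} (\<lambda>_. {-1, 1})"

definition spin_prod :: "(nat \<Rightarrow> real) \<Rightarrow> nat set \<Rightarrow> real" where
  "spin_prod \<sigma> X = (\<Prod>i\<in>X. \<sigma> i)"

definition hamiltonian ::
  "nat \<Rightarrow> (nat set \<Rightarrow> real) \<Rightarrow> real \<Rightarrow> real \<Rightarrow> (nat \<Rightarrow> nat) \<Rightarrow> (nat \<Rightarrow> real) \<Rightarrow> real" where
  "hamiltonian n J h0 h1 \<tau> \<sigma> =
     - (\<Sum>X\<in>Pow {0..<n}. J X * spin_prod \<sigma> X)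
     - h0 * (\<Sum>i<n. \<sigma> i) - h1 * (\<Sum>i<n. real (\<tau> i) * \<sigma> i)"

definition gibbs ::
  "nat \<Rightarrow> (nat set \<Rightarrow> real) \<Rightarrow> real \<Rightarrow> real \<Rightarrow> (nat \<Rightarrow> nat) \<Rightarrow> ((nat \<Rightarrow> real) \<Rightarrow> real) \<Rightarrow> real" where
  "gibbs n J h0 h1 \<tau> f =
     (\<Sum>\<sigma>\<in>spins n. f \<sigma> * exp (- hamiltonian n J h0 h1 \<tau> \<sigma>)) /
     (\<Sum>\<sigma>\<in>spins n. exp (- hamiltonian n J h0 h1 \<tau> \<sigma>))"

definition overlap_avg ::
  "nat \<Rightarrow> nat \<Rightarrow> (nat set \<Rightarrow> real) \<Rightarrow> real \<Rightarrow> real \<Rightarrow> (nat \<Rightarrow> nat) \<Rightarrow> real" where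
  "overlap_avg n k J h0 h1 \<tau> = (1 / real n) * (\<Sum>i<n. (gibbs n J h0 h1 \<tau> (\<lambda>\<sigma>. \<sigma> i)) ^ k)"

text \<open>Poisson distribution with mean r (point mass at 0 when r = 0).\<close>
definition pois :: "real \<Rightarrow> nat pmf" where
  "pois r = (if 0 < r then poisson_pmf r else return_pmf 0)"

definition tau_law :: "nat \<Rightarrow> real \<Rightarrow> real \<Rightarrow> (nat \<Rightarrow> nat) pmf" where
  "tau_law n \<alpha> \<theta> = Pi_pmf {0..<n} 0 (\<lambda>_. pois (\<alpha> * real n powr (\<theta> - 1)))"

definition E_tau :: "nat \<Rightarrow> real \<Rightarrow> real \<Rightarrow> ((nat \<Rightarrow> nat) \<Rightarrow> real) \<Rightarrow> real" where
  "E_tau n \<alpha> \<theta> g = measure_pmf.expectation (tau_law n \<alpha> \<theta>) g"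

end

theory Submission
  imports Defs
begin

text \<open>For fixed \<open>h\<^sub>0 > 0\<close> the overlap \<open>\<langle>Q\<^sub>k\<rangle>\<close> is a function of the independent
  Poisson variables \<open>\<tau>\<^sub>i\<close> with values in \<open>[0, 1]\<close> that is nondecreasing in every \<open>\<tau>\<^sub>i\<close>:
  by the first GKS inequality the magnetizations \<open>\<langle>\<sigma>\<^sub>j\<rangle>\<close> lie in \<open>[0, 1]\<close>, and by the
  second one they increase with the fields \<open>h\<^sub>0 + h\<^sub>1 \<tau>\<^sub>i\<close>. For such functions the
  Poisson law with mean \<open>\<lambda> = \<alpha> n\<^sup>\<theta>\<^sup>-\<^sup>1\<close> satisfies the Efron--Stein type bound
  \<open>Var F \<le> \<lambda> \<Sum>\<^sub>i E[F(\<tau> + e\<^sub>i) - F(\<tau>)]\<close>, and since \<open>x\<^sup>k - y\<^sup>k \<le> k (x - y)\<close> on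
  \<open>[0, 1]\<close>, the increments of \<open>\<langle>Q\<^sub>k\<rangle>\<close> are at most \<open>k/n\<close> times those of
  \<open>\<Sum>\<^sub>j \<langle>\<sigma>\<^sub>j\<rangle> = \<partial>\<^sub>h\<^sub>0 ln Z\<close>. Integrating over \<open>h\<^sub>0\<close> therefore leaves
  \<open>\<lambda> k/n \<Sum>\<^sub>i E[ln Z(\<tau> + e\<^sub>i) - ln Z(\<tau>)]\<close> at the two endpoints, and each of these
  differences lies in \<open>[0, h\<^sub>1]\<close> because \<open>\<partial> ln Z / \<partial>b\<^sub>i = \<langle>\<sigma>\<^sub>i\<rangle> \<in> [0, 1]\<close>.\<close>

section \<open>Spin configurations\<close>

lemma finite_spins: "finite (spins n)"
  unfolding spins_def by (auto intro!: finite_PiE)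

lemma spins_nonempty: "spins n \<noteq> {}"
  unfolding spins_def by (simp add: PiE_eq_empty_iff)

lemma spin_values: "\<sigma> \<in> spins n \<Longrightarrow> i < n \<Longrightarrow> \<sigma> i = -1 \<or> \<sigma> i = 1"
  unfolding spins_def by (auto simp: PiE_iff)

lemma spin_undefined: "\<sigma> \<in> spins n \<Longrightarrow> \<not> i < n \<Longrightarrow> \<sigma> i = undefined"
  unfolding spins_def by (auto simp: PiE_def extensional_def)

lemma spin_square: "\<sigma> \<in> spins n \<Longrightarrow> i < n \<Longrightarrow> \<sigma> i * \<sigma> i = 1"
  using spin_values by fastforce

lemma spin_prod_pm1:
  assumes "\<sigma> \<in> spins n" "X \<subseteq> {0..<n}"
  shows "spin_prod \<sigma> X = 1 \<or> spin_prod \<sigma> X = -1"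
proof -
  have "spin_prod \<sigma> X * spin_prod \<sigma> X = (\<Prod>i\<in>X. \<sigma> i * \<sigma> i)"
    unfolding spin_prod_def by (simp add: prod.distrib)
  also have "\<dots> = 1"
    using assms by (intro prod.neutral) (force intro: spin_square)
  finally show ?thesis
    by (simp add: square_eq_1_iff)
qed

lemma spin_prod_mult:
  assumes "\<sigma> \<in> spins n" "A \<subseteq> {0..<n}" "B \<subseteq> {0..<n}"
  shows "spin_prod \<sigma> A * spin_prod \<sigma> B = spin_prod \<sigma> (sym_diff A B)"
proof -
  have fin: "finite A" "finite B"
    using assms finite_subset by blast+
  have "A \<inter> B \<subseteq> {0..<n}"
    using assms by auto
  then have square: "spin_prod \<sigma> (A \<inter> B) * spin_prod \<sigma> (A \<inter> B) = 1"
    using spin_prod_pm1[OF assms(1)] by (metis mult_1 mult_minus1 minus_minus)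
  have "spin_prod \<sigma> A = spin_prod \<sigma> (A \<inter> B) * spin_prod \<sigma> (A - B)"
    unfolding spin_prod_def by (rule prod.Int_Diff[OF fin(1)])
  moreover have "spin_prod \<sigma> B = spin_prod \<sigma> (A \<inter> B) * spin_prod \<sigma> (B - A)"
    unfolding spin_prod_def by (subst prod.Int_Diff[OF fin(2), of _ A]) (simp add: Int_commute)
  ultimately have "spin_prod \<sigma> A * spin_prod \<sigma> B =
      (spin_prod \<sigma> (A \<inter> B) * spin_prod \<sigma> (A \<inter> B)) * (spin_prod \<sigma> (A - B) * spin_prod \<sigma> (B - A))"
    by (simp only: mult_ac)
  also have "\<dots> = spin_prod \<sigma> (A - B) * spin_prod \<sigma> (B - A)"
    unfolding square by simp
  also have "\<dots> = spin_prod \<sigma> (sym_diff A B)"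
    unfolding spin_prod_def using fin by (subst prod.union_disjoint) auto
  finally show ?thesis .
qed

lemma sum_spin_prod_nonneg:
  assumes "T \<subseteq> {0..<n}"
  shows "0 \<le> (\<Sum>\<sigma>\<in>spins n. spin_prod \<sigma> T)"
proof (cases "T = {}")
  case True
  then show ?thesis by (simp add: spin_prod_def)
next
  case False
  then obtain t where t: "t \<in> T" by auto
  have fin: "finite T"
    using assms finite_subset by blast
  let ?flip = "\<lambda>\<sigma>::nat \<Rightarrow> real. \<sigma>(t := - \<sigma> t)"
  have flip: "?flip \<sigma> \<in> spins n" if "\<sigma> \<in> spins n" for \<sigma>
    using that t assms unfolding spins_def by (auto simp: PiE_iff extensional_def)
  have "spin_prod (?flip \<sigma>) T = - spin_prod \<sigma> T" for \<sigma>
  proof -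
    have "(\<Prod>i\<in>T - {t}. ?flip \<sigma> i) = (\<Prod>i\<in>T - {t}. \<sigma> i)"
      by (rule prod.cong) auto
    then show ?thesis
      unfolding spin_prod_def using fin t by (simp add: prod.remove)
  qed
  moreover have "(\<Sum>\<sigma>\<in>spins n. spin_prod \<sigma> T) = (\<Sum>\<sigma>\<in>spins n. spin_prod (?flip \<sigma>) T)"
    by (rule sum.reindex_bij_witness[of _ ?flip ?flip]) (auto simp: flip)
  ultimately show ?thesis
    by (simp add: sum_negf)
qed

section \<open>The GKS inequalities\<close>

definition interaction :: "'i set \<Rightarrow> ('i \<Rightarrow> nat set) \<Rightarrow> ('i \<Rightarrow> real) \<Rightarrow> (nat \<Rightarrow> real) \<Rightarrow> real"
  where "interaction I S c \<sigma> = (\<Sum>i\<in>I. c i * spin_prod \<sigma> (S i))"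

lemma exp_mult_pm1:
  fixes c s :: real
  assumes "s = 1 \<or> s = -1"
  shows "exp (c * s) = cosh c + s * sinh c"
  using assms by (auto simp: cosh_def sinh_def field_simps real_scaleR_def)

text \<open>Expand \<open>exp (c \<sigma>\<^sub>S) = cosh c + \<sigma>\<^sub>S sinh c\<close> and use \<open>\<sigma>\<^sub>T \<sigma>\<^sub>S = \<sigma>\<^bsub>T \<triangle> S\<^esub>\<close>:
  both coefficients are nonnegative when \<open>c \<ge> 0\<close>.\<close>
lemma gks_first_step:
  assumes IH: "\<And>T. T \<subseteq> {0..<n} \<Longrightarrow> 0 \<le> (\<Sum>\<sigma>\<in>spins n. spin_prod \<sigma> T * exp (E \<sigma>))"
    and "S \<subseteq> {0..<n}" "0 \<le> c" "T \<subseteq> {0..<n}"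
  shows "0 \<le> (\<Sum>\<sigma>\<in>spins n. spin_prod \<sigma> T * exp (c * spin_prod \<sigma> S + E \<sigma>))"
proof -
  let ?T' = "sym_diff T S"
  have "?T' \<subseteq> {0..<n}"
    using assms by auto
  have "spin_prod \<sigma> T * exp (c * spin_prod \<sigma> S + E \<sigma>) =
      cosh c * (spin_prod \<sigma> T * exp (E \<sigma>)) + sinh c * (spin_prod \<sigma> ?T' * exp (E \<sigma>))"
    if "\<sigma> \<in> spins n" for \<sigma>
    using exp_mult_pm1[OF spin_prod_pm1[OF that \<open>S \<subseteq> {0..<n}\<close>], of c]
      spin_prod_mult[OF that \<open>T \<subseteq> {0..<n}\<close> \<open>S \<subseteq> {0..<n}\<close>]
    by (simp add: exp_add algebra_simps)
  then have "(\<Sum>\<sigma>\<in>spins n. spin_prod \<sigma> T * exp (c * spin_prod \<sigma> S + E \<sigma>)) =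
      cosh c * (\<Sum>\<sigma>\<in>spins n. spin_prod \<sigma> T * exp (E \<sigma>))
      + sinh c * (\<Sum>\<sigma>\<in>spins n. spin_prod \<sigma> ?T' * exp (E \<sigma>))"
    by (simp add: sum.distrib sum_distrib_left)
  also have "0 \<le> \<dots>"
    using IH[of T] IH[OF \<open>?T' \<subseteq> {0..<n}\<close>] assms
    by (intro add_nonneg_nonneg mult_nonneg_nonneg) (auto simp: cosh_real_nonneg_le_iff)
  finally show ?thesis .
qed

theorem gks_first:
  assumes "finite I" "\<And>i. i \<in> I \<Longrightarrow> S i \<subseteq> {0..<n}" "\<And>i. i \<in> I \<Longrightarrow> 0 \<le> c i"
    and "T \<subseteq> {0..<n}"
  shows "0 \<le> (\<Sum>\<sigma>\<in>spins n. spin_prod \<sigma> T * exp (interaction I S c \<sigma>))"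
  using assms
proof (induction I arbitrary: T rule: finite_induct)
  case empty
  then show ?case
    using sum_spin_prod_nonneg[of T n] by (simp add: interaction_def)
next
  case (insert i I)
  then show ?case
    using gks_first_step[where E = "interaction I S c" and S = "S i" and c = "c i"]
    by (simp add: interaction_def)
qed

definition spin_mult :: "nat \<Rightarrow> (nat \<Rightarrow> real) \<Rightarrow> (nat \<Rightarrow> real) \<Rightarrow> nat \<Rightarrow> real"
  where "spin_mult n \<sigma> \<rho> = (\<lambda>k. if k < n then \<sigma> k * \<rho> k else undefined)"

lemma spin_mult_in_spins: "\<sigma> \<in> spins n \<Longrightarrow> \<rho> \<in> spins n \<Longrightarrow> spin_mult n \<sigma> \<rho> \<in> spins n"
proof -
  have pm1: "x * y = -1 \<or> x * y = 1" if "x = -1 \<or> x = 1" "y = -1 \<or> y = (1::real)" for x y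
    using that by auto
  assume "\<sigma> \<in> spins n" "\<rho> \<in> spins n"
  then show ?thesis
    unfolding spins_def spin_mult_def using pm1 by (auto simp: PiE_iff extensional_def)
qed

lemma spin_mult_cancel: "\<sigma> \<in> spins n \<Longrightarrow> \<rho> \<in> spins n \<Longrightarrow> spin_mult n \<sigma> (spin_mult n \<sigma> \<rho>) = \<rho>"
  unfolding spin_mult_def using spin_square[of \<sigma> n] spin_undefined[of \<rho> n]
  by (auto simp: fun_eq_iff mult.assoc[symmetric])

lemma spin_prod_spin_mult:
  "X \<subseteq> {0..<n} \<Longrightarrow> spin_prod (spin_mult n \<sigma> \<rho>) X = spin_prod \<sigma> X * spin_prod \<rho> X"
  unfolding spin_prod_def spin_mult_def
  by (subst prod.distrib[symmetric]) (rule prod.cong, auto)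

lemma interaction_spin_mult:
  assumes "\<And>i. i \<in> I \<Longrightarrow> S i \<subseteq> {0..<n}"
  shows "interaction I S c \<sigma> + interaction I S c (spin_mult n \<sigma> \<rho>) =
    interaction I S (\<lambda>i. c i * (1 + spin_prod \<rho> (S i))) \<sigma>"
  unfolding interaction_def sum.distrib[symmetric]
  using assms by (intro sum.cong) (auto simp: spin_prod_spin_mult algebra_simps)

lemma double_sum_covariance:
  fixes a b w :: "'a \<Rightarrow> real"
  shows "(\<Sum>x\<in>S. \<Sum>y\<in>S. (a x - a y) * (b x - b y) * (w x * w y)) =
    2 * ((\<Sum>x\<in>S. w x) * (\<Sum>x\<in>S. a x * b x * w x) - (\<Sum>x\<in>S. a x * w x) * (\<Sum>x\<in>S. b x * w x))"
proof -
  have "(\<Sum>x\<in>S. \<Sum>y\<in>S. (a x - a y) * (b x - b y) * (w x * w y)) =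
     (\<Sum>x\<in>S. \<Sum>y\<in>S. (a x * b x * w x) * w y + w x * (a y * b y * w y)
        - (a x * w x) * (b y * w y) - (b x * w x) * (a y * w y))"
    by (intro sum.cong refl) (simp add: algebra_simps)
  also have "\<dots> = (\<Sum>x\<in>S. a x * b x * w x) * (\<Sum>x\<in>S. w x) + (\<Sum>x\<in>S. w x) * (\<Sum>x\<in>S. a x * b x * w x)
      - (\<Sum>x\<in>S. a x * w x) * (\<Sum>x\<in>S. b x * w x) - (\<Sum>x\<in>S. b x * w x) * (\<Sum>x\<in>S. a x * w x)"
    by (simp add: sum.distrib sum_subtractf sum_product)
  finally show ?thesis
    by (simp add: algebra_simps)
qed

text \<open>Ginibre's duplication: summing over pairs \<open>(\<sigma>, \<sigma>\<rho>)\<close> turns the covariance into a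
  sum over \<open>\<rho>\<close> of correlations of a system with the nonnegative couplings \<open>c (1 + \<rho>\<^sub>S)\<close>.\<close>
theorem gks_second:
  assumes "finite I" "\<And>i. i \<in> I \<Longrightarrow> S i \<subseteq> {0..<n}" "\<And>i. i \<in> I \<Longrightarrow> 0 \<le> c i"
    and A: "A \<subseteq> {0..<n}" and B: "B \<subseteq> {0..<n}"
  defines "w \<equiv> \<lambda>\<sigma>. exp (interaction I S c \<sigma>)"
  shows "(\<Sum>\<sigma>\<in>spins n. spin_prod \<sigma> A * w \<sigma>) * (\<Sum>\<sigma>\<in>spins n. spin_prod \<sigma> B * w \<sigma>)
    \<le> (\<Sum>\<sigma>\<in>spins n. w \<sigma>) * (\<Sum>\<sigma>\<in>spins n. spin_prod \<sigma> A * spin_prod \<sigma> B * w \<sigma>)"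
proof -
  let ?F = "\<lambda>x y. (spin_prod x A - spin_prod y A) * (spin_prod x B - spin_prod y B) * (w x * w y)"
  have "(\<Sum>x\<in>spins n. \<Sum>y\<in>spins n. ?F x y) = (\<Sum>x\<in>spins n. \<Sum>\<rho>\<in>spins n. ?F x (spin_mult n x \<rho>))"
  proof (rule sum.cong[OF refl])
    fix x assume "x \<in> spins n"
    then show "(\<Sum>y\<in>spins n. ?F x y) = (\<Sum>\<rho>\<in>spins n. ?F x (spin_mult n x \<rho>))"
      by (intro sum.reindex_bij_witness[of _ "spin_mult n x" "spin_mult n x"])
        (auto simp: spin_mult_cancel spin_mult_in_spins)
  qed
  also have "\<dots> = (\<Sum>\<rho>\<in>spins n. \<Sum>x\<in>spins n. ?F x (spin_mult n x \<rho>))"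
    by (rule sum.swap)
  also have "0 \<le> \<dots>"
  proof (rule sum_nonneg)
    fix \<rho> assume \<rho>: "\<rho> \<in> spins n"
    let ?c = "\<lambda>i. c i * (1 + spin_prod \<rho> (S i))"
    have pair_term: "?F x (spin_mult n x \<rho>) = (1 - spin_prod \<rho> A) * (1 - spin_prod \<rho> B) *
        (spin_prod x (sym_diff A B) * exp (interaction I S ?c x))" if x: "x \<in> spins n" for x
    proof -
      have "w x * w (spin_mult n x \<rho>) = exp (interaction I S ?c x)"
        unfolding w_def exp_add[symmetric] by (rule arg_cong[OF interaction_spin_mult[OF assms(2)]])
      then show ?thesis
        unfolding spin_prod_mult[OF x A B, symmetric]
        by (simp add: spin_prod_spin_mult A B algebra_simps)
    qed
    have "0 \<le> ?c i" if "i \<in> I" for i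
      using assms(3)[OF that] spin_prod_pm1[OF \<rho> assms(2)[OF that]] by auto
    then have "0 \<le> (\<Sum>x\<in>spins n. spin_prod x (sym_diff A B) * exp (interaction I S ?c x))"
      using assms(1,2) A B by (intro gks_first) auto
    moreover have "0 \<le> 1 - spin_prod \<rho> A" "0 \<le> 1 - spin_prod \<rho> B"
      using spin_prod_pm1[OF \<rho> A] spin_prod_pm1[OF \<rho> B] by auto
    ultimately show "0 \<le> (\<Sum>x\<in>spins n. ?F x (spin_mult n x \<rho>))"
      using pair_term by (simp add: sum_distrib_left[symmetric])
  qed
  finally show ?thesis
    unfolding double_sum_covariance by simp
qed

section \<open>Gibbs measures in an external field\<close>

definition log_weight :: "nat \<Rightarrow> (nat set \<Rightarrow> real) \<Rightarrow> (nat \<Rightarrow> real) \<Rightarrow> (nat \<Rightarrow> real) \<Rightarrow> real"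
  where "log_weight n J b \<sigma> = (\<Sum>X\<in>Pow {0..<n}. J X * spin_prod \<sigma> X) + (\<Sum>k<n. b k * \<sigma> k)"

lemma log_weight_eq_interaction:
  "log_weight n J b \<sigma> =
    interaction (Pow {0..<n} <+> {..<n}) (case_sum id (\<lambda>k. {k})) (case_sum J b) \<sigma>"
  by (simp add: log_weight_def interaction_def sum.Plus spin_prod_def)

definition partition_fn :: "nat \<Rightarrow> (nat set \<Rightarrow> real) \<Rightarrow> (nat \<Rightarrow> real) \<Rightarrow> real"
  where "partition_fn n J b = (\<Sum>\<sigma>\<in>spins n. exp (log_weight n J b \<sigma>))"

definition gibbs_avg ::
  "nat \<Rightarrow> (nat set \<Rightarrow> real) \<Rightarrow> (nat \<Rightarrow> real) \<Rightarrow> ((nat \<Rightarrow> real) \<Rightarrow> real) \<Rightarrow> real"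
  where "gibbs_avg n J b f =
    (\<Sum>\<sigma>\<in>spins n. f \<sigma> * exp (log_weight n J b \<sigma>)) / partition_fn n J b"

definition magnetization :: "nat \<Rightarrow> (nat set \<Rightarrow> real) \<Rightarrow> (nat \<Rightarrow> real) \<Rightarrow> nat \<Rightarrow> real"
  where "magnetization n J b j = gibbs_avg n J b (\<lambda>\<sigma>. \<sigma> j)"

lemma partition_fn_pos: "0 < partition_fn n J b"
  unfolding partition_fn_def using finite_spins spins_nonempty by (intro sum_pos) auto

lemma gibbs_eq_gibbs_avg: "gibbs n J h0 h1 \<tau> f = gibbs_avg n J (\<lambda>k. h0 + h1 * real (\<tau> k)) f"
proof -
  have "(\<Sum>k<n. (h0 + h1 * real (\<tau> k)) * \<sigma> k) = h0 * (\<Sum>k<n. \<sigma> k) + h1 * (\<Sum>k<n. real (\<tau> k) * \<sigma> k)"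
    for \<sigma> :: "nat \<Rightarrow> real"
    by (simp add: distrib_right sum.distrib sum_distrib_left mult.assoc)
  then have "- hamiltonian n J h0 h1 \<tau> \<sigma> = log_weight n J (\<lambda>k. h0 + h1 * real (\<tau> k)) \<sigma>" for \<sigma>
    unfolding hamiltonian_def log_weight_def by simp
  then show ?thesis
    unfolding gibbs_def gibbs_avg_def partition_fn_def by simp
qed

lemma gibbs_avg_sum:
  "gibbs_avg n J b (\<lambda>\<sigma>. \<Sum>k\<in>K. d k * g k \<sigma>) = (\<Sum>k\<in>K. d k * gibbs_avg n J b (g k))"
proof -
  let ?w = "\<lambda>\<sigma>. exp (log_weight n J b \<sigma>)"
  have "(\<Sum>\<sigma>\<in>spins n. (\<Sum>k\<in>K. d k * g k \<sigma>) * ?w \<sigma>) = (\<Sum>\<sigma>\<in>spins n. \<Sum>k\<in>K. d k * (g k \<sigma> * ?w \<sigma>))"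
    by (simp add: sum_distrib_right mult.assoc)
  also have "\<dots> = (\<Sum>k\<in>K. d k * (\<Sum>\<sigma>\<in>spins n. g k \<sigma> * ?w \<sigma>))"
    by (subst sum.swap) (simp add: sum_distrib_left)
  finally show ?thesis
    unfolding gibbs_avg_def by (simp only: sum_divide_distrib[of _ K] times_divide_eq_right)
qed

lemma abs_magnetization_le:
  assumes "j < n"
  shows "\<bar>magnetization n J b j\<bar> \<le> 1"
proof -
  have "\<bar>\<Sum>\<sigma>\<in>spins n. \<sigma> j * exp (log_weight n J b \<sigma>)\<bar>
      \<le> (\<Sum>\<sigma>\<in>spins n. \<bar>\<sigma> j * exp (log_weight n J b \<sigma>)\<bar>)"
    by (rule sum_abs)
  also have "\<dots> = partition_fn n J b"
    unfolding partition_fn_def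
    by (rule sum.cong[OF refl]) (use spin_values[OF _ assms] in \<open>force simp: abs_mult\<close>)
  finally show ?thesis
    using partition_fn_pos[of n J b] unfolding magnetization_def gibbs_avg_def
    by (simp add: abs_divide divide_le_eq_1)
qed

lemma log_weight_sets_subset:
  fixes n :: nat
  shows "x \<in> Pow {0..<n} <+> {..<n} \<Longrightarrow> case_sum id (\<lambda>k. {k}) x \<subseteq> {0..<n}"
  by auto

lemma log_weight_couplings_nonneg:
  fixes J :: "nat set \<Rightarrow> real" and b :: "nat \<Rightarrow> real"
  assumes "\<And>X. X \<subseteq> {0..<n} \<Longrightarrow> 0 \<le> J X" "\<And>k. k < n \<Longrightarrow> 0 \<le> b k"
  shows "x \<in> Pow {0..<n} <+> {..<n} \<Longrightarrow> 0 \<le> case_sum J b x"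
  using assms by auto

lemma magnetization_nonneg:
  assumes "\<And>X. X \<subseteq> {0..<n} \<Longrightarrow> 0 \<le> J X" "\<And>k. k < n \<Longrightarrow> 0 \<le> b k" "j < n"
  shows "0 \<le> magnetization n J b j"
proof -
  have "0 \<le> (\<Sum>\<sigma>\<in>spins n. spin_prod \<sigma> {j} * exp (log_weight n J b \<sigma>))"
    unfolding log_weight_eq_interaction
    using log_weight_sets_subset log_weight_couplings_nonneg[OF assms(1,2)] assms(3)
    by (intro gks_first) auto
  then show ?thesis
    using partition_fn_pos[of n J b]
    by (simp add: magnetization_def gibbs_avg_def spin_prod_def)
qed

lemma magnetization_covariance_nonneg:
  assumes "\<And>X. X \<subseteq> {0..<n} \<Longrightarrow> 0 \<le> J X" "\<And>k. k < n \<Longrightarrow> 0 \<le> b k" "i < n" "j < n"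
  shows "magnetization n J b i * magnetization n J b j \<le> gibbs_avg n J b (\<lambda>\<sigma>. \<sigma> i * \<sigma> j)"
proof -
  let ?w = "\<lambda>\<sigma>. exp (log_weight n J b \<sigma>)"
  let ?Z = "partition_fn n J b"
  have "(\<Sum>\<sigma>\<in>spins n. spin_prod \<sigma> {i} * ?w \<sigma>) * (\<Sum>\<sigma>\<in>spins n. spin_prod \<sigma> {j} * ?w \<sigma>)
      \<le> (\<Sum>\<sigma>\<in>spins n. ?w \<sigma>) * (\<Sum>\<sigma>\<in>spins n. spin_prod \<sigma> {i} * spin_prod \<sigma> {j} * ?w \<sigma>)"
    unfolding log_weight_eq_interaction
    using log_weight_sets_subset log_weight_couplings_nonneg[OF assms(1,2)] assms(3,4)
    by (intro gks_second) auto
  then have "(\<Sum>\<sigma>\<in>spins n. \<sigma> i * ?w \<sigma>) * (\<Sum>\<sigma>\<in>spins n. \<sigma> j * ?w \<sigma>) / (?Z * ?Z)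
      \<le> ?Z * (\<Sum>\<sigma>\<in>spins n. \<sigma> i * \<sigma> j * ?w \<sigma>) / (?Z * ?Z)"
    unfolding partition_fn_def spin_prod_def by (intro divide_right_mono) auto
  then show ?thesis
    using partition_fn_pos[of n J b]
    unfolding magnetization_def gibbs_avg_def by (simp add: field_simps)
qed

definition field_line :: "(nat \<Rightarrow> real) \<Rightarrow> (nat \<Rightarrow> real) \<Rightarrow> real \<Rightarrow> nat \<Rightarrow> real"
  where "field_line b d t = (\<lambda>k. b k + t * d k)"

lemma field_line_0_1: "field_line b (\<lambda>k. b' k - b k) 0 = b" "field_line b (\<lambda>k. b' k - b k) 1 = b'"
  by (auto simp: field_line_def)

lemma log_weight_field_line:
  "log_weight n J (field_line b d t) \<sigma> = log_weight n J b \<sigma> + t * (\<Sum>k<n. d k * \<sigma> k)"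
  unfolding log_weight_def field_line_def by (simp add: algebra_simps sum.distrib sum_distrib_left)

lemma has_real_derivative_sum_weights_field_line:
  "((\<lambda>t. \<Sum>\<sigma>\<in>spins n. f \<sigma> * exp (log_weight n J (field_line b d t) \<sigma>)) has_real_derivative
     (\<Sum>\<sigma>\<in>spins n. f \<sigma> * (\<Sum>k<n. d k * \<sigma> k) * exp (log_weight n J (field_line b d t) \<sigma>))) (at t)"
  unfolding log_weight_field_line by (rule DERIV_sum) (auto intro!: derivative_eq_intros)

lemma has_real_derivative_partition_fn_field_line:
  "((\<lambda>t. partition_fn n J (field_line b d t)) has_real_derivative
     (\<Sum>\<sigma>\<in>spins n. (\<Sum>k<n. d k * \<sigma> k) * exp (log_weight n J (field_line b d t) \<sigma>))) (at t)"
  unfolding partition_fn_def using has_real_derivative_sum_weights_field_line[of "\<lambda>_. 1"] by simp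

lemma has_real_derivative_gibbs_avg_field_line:
  "((\<lambda>t. gibbs_avg n J (field_line b d t) f) has_real_derivative
     gibbs_avg n J (field_line b d t) (\<lambda>\<sigma>. f \<sigma> * (\<Sum>k<n. d k * \<sigma> k))
     - gibbs_avg n J (field_line b d t) f * gibbs_avg n J (field_line b d t) (\<lambda>\<sigma>. \<Sum>k<n. d k * \<sigma> k))
   (at t)"
proof -
  have Z: "partition_fn n J (field_line b d t) \<noteq> 0"
    using partition_fn_pos by (metis less_irrefl)
  from DERIV_divide[OF has_real_derivative_sum_weights_field_line
      has_real_derivative_partition_fn_field_line Z] show ?thesis
    unfolding gibbs_avg_def by (rule DERIV_cong) (use Z in \<open>simp add: field_simps\<close>)
qed

lemma has_real_derivative_ln_partition_fn_field_line:
  "((\<lambda>t. ln (partition_fn n J (field_line b d t))) has_real_derivative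
     (\<Sum>k<n. d k * magnetization n J (field_line b d t) k)) (at t)"
proof -
  have "((\<lambda>t. ln (partition_fn n J (field_line b d t))) has_real_derivative
      gibbs_avg n J (field_line b d t) (\<lambda>\<sigma>. \<Sum>k<n. d k * \<sigma> k)) (at t)"
    unfolding gibbs_avg_def using partition_fn_pos
    by (auto intro!: derivative_eq_intros has_real_derivative_partition_fn_field_line)
  then show ?thesis
    unfolding magnetization_def gibbs_avg_sum[where g = "\<lambda>k \<sigma>. \<sigma> k", symmetric] .
qed

lemma has_real_derivative_magnetization_field_line:
  "((\<lambda>t. magnetization n J (field_line b d t) j) has_real_derivative
     (\<Sum>k<n. d k * (gibbs_avg n J (field_line b d t) (\<lambda>\<sigma>. \<sigma> j * \<sigma> k)
        - magnetization n J (field_line b d t) j * magnetization n J (field_line b d t) k))) (at t)"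
proof -
  let ?b = "field_line b d t"
  have "gibbs_avg n J ?b (\<lambda>\<sigma>. \<sigma> j * (\<Sum>k<n. d k * \<sigma> k)) =
      gibbs_avg n J ?b (\<lambda>\<sigma>. \<Sum>k<n. d k * (\<sigma> j * \<sigma> k))"
    by (simp add: sum_distrib_left mult_ac)
  also have "\<dots> = (\<Sum>k<n. d k * gibbs_avg n J ?b (\<lambda>\<sigma>. \<sigma> j * \<sigma> k))"
    by (rule gibbs_avg_sum)
  finally have "gibbs_avg n J ?b (\<lambda>\<sigma>. \<sigma> j * (\<Sum>k<n. d k * \<sigma> k)) =
      (\<Sum>k<n. d k * gibbs_avg n J ?b (\<lambda>\<sigma>. \<sigma> j * \<sigma> k))" .
  moreover have "gibbs_avg n J ?b (\<lambda>\<sigma>. \<Sum>k<n. d k * \<sigma> k) = (\<Sum>k<n. d k * magnetization n J ?b k)"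
    using gibbs_avg_sum[where g = "\<lambda>k \<sigma>. \<sigma> k"] by (simp add: magnetization_def)
  ultimately show ?thesis
    using has_real_derivative_gibbs_avg_field_line[of n J b d "\<lambda>\<sigma>. \<sigma> j" t]
    by (simp add: magnetization_def sum_subtractf sum_distrib_left right_diff_distrib mult_ac)
qed

theorem magnetization_mono:
  assumes J: "\<And>X. X \<subseteq> {0..<n} \<Longrightarrow> 0 \<le> J X" and b: "\<And>k. k < n \<Longrightarrow> 0 \<le> b k"
    and le: "\<And>k. k < n \<Longrightarrow> b k \<le> b' k" and "j < n"
  shows "magnetization n J b j \<le> magnetization n J b' j"
proof -
  let ?d = "\<lambda>k. b' k - b k"
  have "magnetization n J (field_line b ?d 0) j \<le> magnetization n J (field_line b ?d 1) j"
  proof (rule DERIV_nonneg_imp_nondecreasing[of 0 1])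
    fix t :: real assume "0 \<le> t" "t \<le> 1"
    then have "0 \<le> field_line b ?d t k" if "k < n" for k
      using b[OF that] le[OF that] unfolding field_line_def by simp
    then have "0 \<le> (\<Sum>k<n. ?d k * (gibbs_avg n J (field_line b ?d t) (\<lambda>\<sigma>. \<sigma> j * \<sigma> k)
        - magnetization n J (field_line b ?d t) j * magnetization n J (field_line b ?d t) k))"
      using le magnetization_covariance_nonneg[OF J _ \<open>j < n\<close>]
      by (intro sum_nonneg mult_nonneg_nonneg) auto
    then show "\<exists>y. ((\<lambda>t. magnetization n J (field_line b ?d t) j) has_real_derivative y) (at t) \<and> 0 \<le> y"
      using has_real_derivative_magnetization_field_line by blast
  qed simp
  then show ?thesis
    by (simp only: field_line_0_1)
qed

theorem ln_partition_fn_mono: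
  assumes J: "\<And>X. X \<subseteq> {0..<n} \<Longrightarrow> 0 \<le> J X" and b: "\<And>k. k < n \<Longrightarrow> 0 \<le> b k"
    and le: "\<And>k. k < n \<Longrightarrow> b k \<le> b' k"
  shows "ln (partition_fn n J b) \<le> ln (partition_fn n J b')"
proof -
  let ?d = "\<lambda>k. b' k - b k"
  have "ln (partition_fn n J (field_line b ?d 0)) \<le> ln (partition_fn n J (field_line b ?d 1))"
  proof (rule DERIV_nonneg_imp_nondecreasing[of 0 1])
    fix t :: real assume "0 \<le> t" "t \<le> 1"
    then have "0 \<le> field_line b ?d t k" if "k < n" for k
      using b[OF that] le[OF that] unfolding field_line_def by simp
    then have "0 \<le> (\<Sum>k<n. ?d k * magnetization n J (field_line b ?d t) k)"
      using le magnetization_nonneg[OF J] by (intro sum_nonneg mult_nonneg_nonneg) auto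
    then show "\<exists>y. ((\<lambda>t. ln (partition_fn n J (field_line b ?d t))) has_real_derivative y) (at t) \<and> 0 \<le> y"
      using has_real_derivative_ln_partition_fn_field_line by blast
  qed simp
  then show ?thesis
    by (simp only: field_line_0_1)
qed

theorem abs_ln_partition_fn_diff_le:
  "\<bar>ln (partition_fn n J b') - ln (partition_fn n J b)\<bar> \<le> (\<Sum>k<n. \<bar>b' k - b k\<bar>)"
proof -
  let ?d = "\<lambda>k. b' k - b k"
  have "norm (ln (partition_fn n J (field_line b ?d 1)) - ln (partition_fn n J (field_line b ?d 0)))
      \<le> (\<Sum>k<n. \<bar>?d k\<bar>) * norm (1 - 0 :: real)"
  proof (rule field_differentiable_bound[of UNIV])
    fix t :: real
    show "((\<lambda>t. ln (partition_fn n J (field_line b ?d t))) has_field_derivative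
        (\<Sum>k<n. ?d k * magnetization n J (field_line b ?d t) k)) (at t within UNIV)"
      by (rule has_real_derivative_ln_partition_fn_field_line)
    have "\<bar>\<Sum>k<n. ?d k * magnetization n J (field_line b ?d t) k\<bar>
        \<le> (\<Sum>k<n. \<bar>?d k\<bar> * \<bar>magnetization n J (field_line b ?d t) k\<bar>)"
      by (rule order_trans[OF sum_abs]) (simp add: abs_mult)
    also have "\<dots> \<le> (\<Sum>k<n. \<bar>?d k\<bar>)"
      using abs_magnetization_le by (intro sum_mono mult_right_le_one_le) auto
    finally show "norm (\<Sum>k<n. ?d k * magnetization n J (field_line b ?d t) k) \<le> (\<Sum>k<n. \<bar>?d k\<bar>)"
      by simp
  qed auto
  then show ?thesis
    by (simp only: field_line_0_1) simp
qed

section \<open>Expectations and variances over pmfs\<close>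

lemma abs_power2_le: "\<bar>x\<bar> \<le> B \<Longrightarrow> \<bar>x\<^sup>2\<bar> \<le> (B::real)\<^sup>2"
  using power_mono[of "\<bar>x\<bar>" B 2] by simp

lemma integrable_measure_pmf_bounded:
  fixes f :: "'a \<Rightarrow> real"
  shows "(\<And>x. \<bar>f x\<bar> \<le> B) \<Longrightarrow> integrable (measure_pmf p) f"
  by (intro measure_pmf.integrable_const_bound[where B = B]) auto

lemma abs_expectation_le:
  fixes f :: "'a \<Rightarrow> real"
  assumes "\<And>x. \<bar>f x\<bar> \<le> B"
  shows "\<bar>measure_pmf.expectation p f\<bar> \<le> B"
proof -
  have "\<bar>measure_pmf.expectation p f\<bar> \<le> measure_pmf.expectation p (\<lambda>x. \<bar>f x\<bar>)"
    by (rule integral_abs_bound)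
  also have "\<dots> \<le> B"
    using assms by (intro measure_pmf.integral_le_const integrable_measure_pmf_bounded[of _ B]) auto
  finally show ?thesis .
qed

lemma expectation_unit_interval:
  fixes f :: "'a \<Rightarrow> real"
  assumes "\<And>x. 0 \<le> f x \<and> f x \<le> 1"
  shows "0 \<le> measure_pmf.expectation p f \<and> measure_pmf.expectation p f \<le> 1"
  using assms abs_expectation_le[of f 1 p]
  by (auto intro!: Bochner_Integration.integral_nonneg simp: abs_le_iff)

lemma variance_unit_interval:
  fixes f :: "'a \<Rightarrow> real"
  assumes "\<And>x. 0 \<le> f x \<and> f x \<le> 1"
  shows "\<bar>measure_pmf.variance p f\<bar> \<le> 1"
proof (rule abs_expectation_le)
  fix x
  have "\<bar>f x - measure_pmf.expectation p f\<bar> \<le> 1"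
    using assms[of x] expectation_unit_interval[where f = f and p = p, OF assms]
    by (auto simp: abs_le_iff)
  then show "\<bar>(f x - measure_pmf.expectation p f)\<^sup>2\<bar> \<le> 1"
    using abs_power2_le[of _ 1] by simp
qed

lemma variance_eq_bounded:
  fixes f :: "'a \<Rightarrow> real"
  assumes "\<And>x. \<bar>f x\<bar> \<le> B"
  shows "measure_pmf.variance p f =
    measure_pmf.expectation p (\<lambda>x. (f x)\<^sup>2) - (measure_pmf.expectation p f)\<^sup>2"
proof (rule measure_pmf.variance_eq)
  show "integrable p f"
    using assms by (rule integrable_measure_pmf_bounded)
  have "\<bar>(f x)\<^sup>2\<bar> \<le> B\<^sup>2" for x
    using assms[of x] by (rule abs_power2_le)
  then show "integrable p (\<lambda>x. (f x)\<^sup>2)"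
    by (rule integrable_measure_pmf_bounded)
qed

lemma expectation_bind_pmf_bounded:
  fixes f :: "'b \<Rightarrow> real"
  assumes "\<And>x. \<bar>f x\<bar> \<le> B"
  shows "measure_pmf.expectation (bind_pmf M N) f =
    measure_pmf.expectation M (\<lambda>x. measure_pmf.expectation (N x) f)"
  unfolding measure_pmf_bind using measurable_measure_pmf[of N] assms
  by (intro integral_bind[where K = "count_space UNIV" and B = B and B' = 1])
    (auto intro: measure_pmf.finite_measure simp: measure_pmf.emeasure_space_1)

lemma expectation_pair_pmf_bounded:
  fixes f :: "'a \<times> 'b \<Rightarrow> real"
  assumes "\<And>z. \<bar>f z\<bar> \<le> B"
  shows "measure_pmf.expectation (pair_pmf M N) f =
    measure_pmf.expectation N (\<lambda>y. measure_pmf.expectation M (\<lambda>x. f (x, y)))"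
proof -
  have "measure_pmf.expectation (pair_pmf M N) f =
      measure_pmf.expectation (pair_pmf N M) (\<lambda>z. f (snd z, fst z))"
    by (subst pair_commute_pmf) (simp add: case_prod_beta)
  also have "\<dots> = measure_pmf.expectation N (\<lambda>y. measure_pmf.expectation M (\<lambda>x. f (x, y)))"
    unfolding pair_pmf_def using assms by (simp add: expectation_bind_pmf_bounded[of _ B])
  finally show ?thesis .
qed

lemma expectation_Pi_pmf_insert:
  fixes F :: "('a \<Rightarrow> 'b) \<Rightarrow> real"
  assumes "finite A" "x \<notin> A" "\<And>\<tau>. \<bar>F \<tau>\<bar> \<le> B"
  shows "measure_pmf.expectation (Pi_pmf (insert x A) d p) F =
    measure_pmf.expectation (Pi_pmf A d p) (\<lambda>f. measure_pmf.expectation (p x) (\<lambda>y. F (f(x := y))))"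
  using assms
  by (simp add: Pi_pmf_insert[OF assms(1,2)] case_prod_beta expectation_pair_pmf_bounded[of _ B])

text \<open>The law of total variance, conditioning on all coordinates except \<open>x\<close>.\<close>
lemma variance_Pi_pmf_insert:
  fixes F :: "('a \<Rightarrow> 'b) \<Rightarrow> real" and p :: "'a \<Rightarrow> 'b pmf"
  assumes "finite A" "x \<notin> A" and F: "\<And>\<tau>. \<bar>F \<tau>\<bar> \<le> B"
  defines "G \<equiv> \<lambda>f. measure_pmf.expectation (p x) (\<lambda>y. F (f(x := y)))"
  shows "measure_pmf.variance (Pi_pmf (insert x A) d p) F =
    measure_pmf.expectation (Pi_pmf A d p) (\<lambda>f. measure_pmf.variance (p x) (\<lambda>y. F (f(x := y))))
    + measure_pmf.variance (Pi_pmf A d p) G"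
proof -
  let ?P = "Pi_pmf A d p"
  let ?E = "measure_pmf.expectation"
  have F2: "\<bar>(F \<tau>)\<^sup>2\<bar> \<le> B\<^sup>2" for \<tau>
    using F[of \<tau>] by (rule abs_power2_le)
  have G: "\<bar>G f\<bar> \<le> B" for f
    unfolding G_def using F by (rule abs_expectation_le)
  have G2: "\<bar>(G f)\<^sup>2\<bar> \<le> B\<^sup>2" for f
    using G[of f] by (rule abs_power2_le)
  have second_moment: "\<bar>?E (p x) (\<lambda>y. (F (f(x := y)))\<^sup>2)\<bar> \<le> B\<^sup>2" for f
    using F2 by (rule abs_expectation_le)
  have "measure_pmf.variance (Pi_pmf (insert x A) d p) F =
      ?E ?P (\<lambda>f. ?E (p x) (\<lambda>y. (F (f(x := y)))\<^sup>2)) - (?E ?P G)\<^sup>2"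
    unfolding variance_eq_bounded[OF F] G_def
    using expectation_Pi_pmf_insert[where F = F, OF assms(1,2) F]
      expectation_Pi_pmf_insert[where F = "\<lambda>\<tau>. (F \<tau>)\<^sup>2", OF assms(1,2) F2]
    by simp
  also have "\<dots> = ?E ?P (\<lambda>f. ?E (p x) (\<lambda>y. (F (f(x := y)))\<^sup>2) - (G f)\<^sup>2)
      + (?E ?P (\<lambda>f. (G f)\<^sup>2) - (?E ?P G)\<^sup>2)"
    using second_moment G2
    by (simp add: integrable_measure_pmf_bounded[of _ "B\<^sup>2"])
  also have "\<dots> = ?E ?P (\<lambda>f. measure_pmf.variance (p x) (\<lambda>y. F (f(x := y))))
      + measure_pmf.variance ?P G"
  proof -
    have "measure_pmf.variance (p x) (\<lambda>y. F (f(x := y))) =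
        ?E (p x) (\<lambda>y. (F (f(x := y)))\<^sup>2) - (G f)\<^sup>2" for f
      unfolding G_def using F by (rule variance_eq_bounded)
    then show ?thesis
      by (simp only: variance_eq_bounded[OF G])
  qed
  finally show ?thesis .
qed

lemma expectation_mono_bounded:
  fixes f g :: "'a \<Rightarrow> real"
  assumes "\<And>x. \<bar>f x\<bar> \<le> B" "\<And>x. \<bar>g x\<bar> \<le> B" "\<And>x. f x \<le> g x"
  shows "measure_pmf.expectation p f \<le> measure_pmf.expectation p g"
  using assms by (intro integral_mono integrable_measure_pmf_bounded) auto

lemma expectation_variance_Pi_pmf_insert_le:
  fixes p :: "'a \<Rightarrow> nat pmf" and F :: "('a \<Rightarrow> nat) \<Rightarrow> real"
  assumes "finite A" "x \<notin> A"
    and coord: "\<And>g. (\<And>m. 0 \<le> g m \<and> g m \<le> 1) \<Longrightarrow> (\<And>m. g m \<le> g (Suc m)) \<Longrightarrow>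
      measure_pmf.variance (p x) g \<le> c * measure_pmf.expectation (p x) (\<lambda>m. g (Suc m) - g m)"
    and F01: "\<And>\<tau>. 0 \<le> F \<tau> \<and> F \<tau> \<le> 1" and F_mono: "\<And>\<tau>. F \<tau> \<le> F (\<tau>(x := Suc (\<tau> x)))"
  shows "measure_pmf.expectation (Pi_pmf A d p) (\<lambda>f. measure_pmf.variance (p x) (\<lambda>y. F (f(x := y))))
    \<le> c * measure_pmf.expectation (Pi_pmf (insert x A) d p) (\<lambda>\<tau>. F (\<tau>(x := Suc (\<tau> x))) - F \<tau>)"
proof -
  let ?E = "measure_pmf.expectation"
  have increment: "\<bar>F \<tau>' - F \<tau>\<bar> \<le> 1" for \<tau> \<tau>'
    using F01[of \<tau>] F01[of \<tau>'] by auto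
  have "?E (Pi_pmf A d p) (\<lambda>f. measure_pmf.variance (p x) (\<lambda>y. F (f(x := y))))
      \<le> ?E (Pi_pmf A d p) (\<lambda>f. c * ?E (p x) (\<lambda>m. F (f(x := Suc m)) - F (f(x := m))))"
  proof (rule expectation_mono_bounded[where B = "1 + \<bar>c\<bar>"])
    fix f
    show "\<bar>measure_pmf.variance (p x) (\<lambda>y. F (f(x := y)))\<bar> \<le> 1 + \<bar>c\<bar>"
      using variance_unit_interval[of "\<lambda>y. F (f(x := y))" "p x"] F01 by fastforce
    have "\<bar>?E (p x) (\<lambda>m. F (f(x := Suc m)) - F (f(x := m)))\<bar> \<le> 1"
      using increment by (rule abs_expectation_le)
    then have "\<bar>c * ?E (p x) (\<lambda>m. F (f(x := Suc m)) - F (f(x := m)))\<bar> \<le> \<bar>c\<bar> * 1"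
      unfolding abs_mult by (rule mult_left_mono) simp
    then show "\<bar>c * ?E (p x) (\<lambda>m. F (f(x := Suc m)) - F (f(x := m)))\<bar> \<le> 1 + \<bar>c\<bar>"
      by simp
    have "F (f(x := m)) \<le> F (f(x := Suc m))" for m
      using F_mono[of "f(x := m)"] by (simp only: fun_upd_same fun_upd_upd)
    then show "measure_pmf.variance (p x) (\<lambda>y. F (f(x := y)))
        \<le> c * ?E (p x) (\<lambda>m. F (f(x := Suc m)) - F (f(x := m)))"
      using F01 by (intro coord) auto
  qed
  also have "\<dots> = c * ?E (Pi_pmf (insert x A) d p) (\<lambda>\<tau>. F (\<tau>(x := Suc (\<tau> x))) - F \<tau>)"
    using expectation_Pi_pmf_insert[where F = "\<lambda>\<tau>. F (\<tau>(x := Suc (\<tau> x))) - F \<tau>" and B = 1,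
        OF assms(1,2) increment]
    by simp
  finally show ?thesis .
qed

lemma expectation_increment_Pi_pmf_insert:
  fixes F :: "('a \<Rightarrow> nat) \<Rightarrow> real" and p :: "'a \<Rightarrow> nat pmf"
  assumes "finite A" "x \<notin> A" "i \<noteq> x" and F: "\<And>\<tau>. \<bar>F \<tau>\<bar> \<le> B"
  defines "G \<equiv> \<lambda>f. measure_pmf.expectation (p x) (\<lambda>y. F (f(x := y)))"
  shows "measure_pmf.expectation (Pi_pmf A d p) (\<lambda>f. G (f(i := Suc (f i))) - G f) =
    measure_pmf.expectation (Pi_pmf (insert x A) d p) (\<lambda>\<tau>. F (\<tau>(i := Suc (\<tau> i))) - F \<tau>)"
proof -
  have increment: "\<bar>F \<tau>' - F \<tau>\<bar> \<le> 2 * B" for \<tau> \<tau>'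
    using F[of \<tau>] F[of \<tau>'] by auto
  have "measure_pmf.expectation (p x) (\<lambda>y. F ((f(x := y))(i := Suc ((f(x := y)) i))) - F (f(x := y)))
      = G (f(i := Suc (f i))) - G f" for f
    unfolding G_def using F \<open>i \<noteq> x\<close>
    by (subst Bochner_Integration.integral_diff[symmetric])
      (auto intro: integrable_measure_pmf_bounded simp: fun_upd_twist)
  then show ?thesis
    using expectation_Pi_pmf_insert[where F = "\<lambda>\<tau>. F (\<tau>(i := Suc (\<tau> i))) - F \<tau>" and B = "2 * B",
        OF assms(1,2) increment]
    by simp
qed

lemma expectation_fun_upd_mono:
  fixes F :: "('a \<Rightarrow> nat) \<Rightarrow> real"
  assumes "i \<noteq> x" and F: "\<And>\<tau>. \<bar>F \<tau>\<bar> \<le> B" and F_mono: "\<And>\<tau>. F \<tau> \<le> F (\<tau>(i := Suc (\<tau> i)))"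
  shows "measure_pmf.expectation q (\<lambda>y. F (f(x := y))) \<le>
    measure_pmf.expectation q (\<lambda>y. F ((f(i := Suc (f i)))(x := y)))"
proof (rule expectation_mono_bounded[OF F F])
  fix y
  have "(f(x := y))(i := Suc ((f(x := y)) i)) = (f(i := Suc (f i)))(x := y)"
    using \<open>i \<noteq> x\<close> by (auto simp: fun_eq_iff)
  then show "F (f(x := y)) \<le> F ((f(i := Suc (f i)))(x := y))"
    using F_mono[of "f(x := y)"] by simp
qed

text \<open>An Efron--Stein type tensorization of the one-dimensional bound \<open>coord\<close>.\<close>
theorem variance_Pi_pmf_le_increments:
  fixes p :: "'a \<Rightarrow> nat pmf" and F :: "('a \<Rightarrow> nat) \<Rightarrow> real"
  assumes coord: "\<And>i g. i \<in> A \<Longrightarrow> (\<And>m. 0 \<le> g m \<and> g m \<le> 1) \<Longrightarrow> (\<And>m. g m \<le> g (Suc m)) \<Longrightarrow>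
      measure_pmf.variance (p i) g \<le> c * measure_pmf.expectation (p i) (\<lambda>m. g (Suc m) - g m)"
    and "finite A"
    and "\<And>\<tau>. 0 \<le> F \<tau> \<and> F \<tau> \<le> 1" and "\<And>i \<tau>. i \<in> A \<Longrightarrow> F \<tau> \<le> F (\<tau>(i := Suc (\<tau> i)))"
  shows "measure_pmf.variance (Pi_pmf A d p) F \<le>
    c * (\<Sum>i\<in>A. measure_pmf.expectation (Pi_pmf A d p) (\<lambda>\<tau>. F (\<tau>(i := Suc (\<tau> i))) - F \<tau>))"
  using assms(2,1,3,4)
proof (induction A arbitrary: F rule: finite_induct)
  case empty
  then show ?case by simp
next
  case (insert x A)
  note F01 = insert.prems(2) and F_mono = insert.prems(3)
  let ?E = "measure_pmf.expectation"
  define G where "G = (\<lambda>f. ?E (p x) (\<lambda>y. F (f(x := y))))"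
  have F: "\<bar>F \<tau>\<bar> \<le> 1" for \<tau>
    using F01[of \<tau>] by auto
  have G01: "0 \<le> G f \<and> G f \<le> 1" for f
    unfolding G_def using F01 by (rule expectation_unit_interval)
  have "measure_pmf.variance (Pi_pmf A d p) G
      \<le> c * (\<Sum>i\<in>A. ?E (Pi_pmf A d p) (\<lambda>f. G (f(i := Suc (f i))) - G f))"
  proof (rule insert.IH)
    fix i f assume "i \<in> A"
    then have "i \<noteq> x"
      using insert.hyps by auto
    moreover have "F \<tau> \<le> F (\<tau>(i := Suc (\<tau> i)))" for \<tau>
      using F_mono \<open>i \<in> A\<close> by blast
    ultimately show "G f \<le> G (f(i := Suc (f i)))"
      unfolding G_def by (rule expectation_fun_upd_mono[OF _ F])
  qed (use G01 insert.prems(1) in auto)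
  also have "\<dots> = c * (\<Sum>i\<in>A. ?E (Pi_pmf (insert x A) d p) (\<lambda>\<tau>. F (\<tau>(i := Suc (\<tau> i))) - F \<tau>))"
    unfolding G_def using insert.hyps
    by (intro arg_cong[where f = "(*) c"] sum.cong refl
        expectation_increment_Pi_pmf_insert[where F = F, OF insert.hyps _ F]) auto
  finally have "measure_pmf.variance (Pi_pmf A d p) G \<le>
      c * (\<Sum>i\<in>A. ?E (Pi_pmf (insert x A) d p) (\<lambda>\<tau>. F (\<tau>(i := Suc (\<tau> i))) - F \<tau>))" .
  moreover have "?E (Pi_pmf A d p) (\<lambda>f. measure_pmf.variance (p x) (\<lambda>y. F (f(x := y))))
      \<le> c * ?E (Pi_pmf (insert x A) d p) (\<lambda>\<tau>. F (\<tau>(x := Suc (\<tau> x))) - F \<tau>)"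
  proof (rule expectation_variance_Pi_pmf_insert_le[OF insert.hyps])
    show "measure_pmf.variance (p x) g \<le> c * ?E (p x) (\<lambda>m. g (Suc m) - g m)"
      if "\<And>m. 0 \<le> g m \<and> g m \<le> 1" "\<And>m. g m \<le> g (Suc m)" for g
      using insert.prems(1)[of x g] that by blast
  qed (use F01 F_mono in blast)+
  moreover have "measure_pmf.variance (Pi_pmf (insert x A) d p) F =
      ?E (Pi_pmf A d p) (\<lambda>f. measure_pmf.variance (p x) (\<lambda>y. F (f(x := y))))
      + measure_pmf.variance (Pi_pmf A d p) G"
    unfolding G_def by (rule variance_Pi_pmf_insert[OF insert.hyps F])
  ultimately show ?case
    unfolding sum.insert[OF insert.hyps] distrib_left by linarith
qed

lemma continuous_on_slope:
  fixes f f' :: "real \<Rightarrow> real"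
  assumes D: "\<And>s. (f has_real_derivative f' s) (at s)"
  shows "continuous_on UNIV (\<lambda>s. if s = x then f' x else (f s - f x) / (s - x))"
  unfolding continuous_on_eq_continuous_at[OF open_UNIV]
proof (intro ballI)
  fix s :: real
  let ?Q = "\<lambda>s. if s = x then f' x else (f s - f x) / (s - x)"
  show "isCont ?Q s"
  proof (cases "s = x")
    case True
    have "((\<lambda>y. (f y - f x) / (y - x)) \<longlongrightarrow> f' x) (at x)"
      using D[of x] by (simp add: has_field_derivative_iff)
    then have "(?Q \<longlongrightarrow> f' x) (at x)"
      by (rule Lim_transform_eventually) (auto simp: eventually_at_filter)
    then show ?thesis
      unfolding True isCont_def by simp
  next
    case False
    have "eventually (\<lambda>y. y \<in> - {x}) (nhds s)"
      using False by (intro eventually_nhds_in_open) auto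
    then have "eventually (\<lambda>y. ?Q y = (f y - f x) / (y - x)) (nhds s)"
      by (rule eventually_mono) simp
    moreover have "isCont (\<lambda>y. (f y - f x) / (y - x)) s"
      using False DERIV_isCont[OF D] by (intro continuous_intros) auto
    ultimately show ?thesis
      by (simp add: isCont_cong)
  qed
qed

text \<open>The difference quotients are bounded by \<open>B\<close> (mean value theorem), so their expectation
  is continuous in \<open>s\<close> by \<open>continuous_on_LINT_pmf\<close>.\<close>
lemma has_real_derivative_expectation:
  fixes \<Phi> \<Phi>' :: "real \<Rightarrow> 'a \<Rightarrow> real"
  assumes D: "\<And>s \<tau>. ((\<lambda>s. \<Phi> s \<tau>) has_real_derivative \<Phi>' s \<tau>) (at s)"
    and \<Phi>': "\<And>s \<tau>. \<bar>\<Phi>' s \<tau>\<bar> \<le> B" and \<Phi>: "\<And>s \<tau>. \<bar>\<Phi> s \<tau>\<bar> \<le> C"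
  shows "((\<lambda>s. measure_pmf.expectation p (\<Phi> s)) has_real_derivative
    measure_pmf.expectation p (\<Phi>' x)) (at x)"
proof -
  define Q where "Q s \<tau> = (if s = x then \<Phi>' x \<tau> else (\<Phi> s \<tau> - \<Phi> x \<tau>) / (s - x))" for s \<tau>
  have "norm (Q s \<tau>) \<le> B" for s \<tau>
  proof (cases "s = x")
    case False
    have "norm (\<Phi> s \<tau> - \<Phi> x \<tau>) \<le> B * norm (s - x)"
      using D \<Phi>' by (intro field_differentiable_bound[of UNIV]) auto
    then show ?thesis
      using False by (simp add: Q_def abs_divide divide_le_eq)
  qed (simp add: Q_def \<Phi>')
  then have "continuous_on UNIV (\<lambda>s. measure_pmf.expectation p (\<lambda>\<tau>. Q s \<tau>))"
    unfolding Q_def using continuous_on_slope[OF D]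
    by (intro continuous_on_LINT_pmf[where B = B]) auto
  then have "isCont (\<lambda>s. measure_pmf.expectation p (\<lambda>\<tau>. Q s \<tau>)) x"
    by (simp add: continuous_on_eq_continuous_at)
  moreover have "(\<lambda>\<tau>. Q x \<tau>) = \<Phi>' x"
    by (simp add: Q_def fun_eq_iff)
  ultimately have "((\<lambda>s. measure_pmf.expectation p (\<lambda>\<tau>. Q s \<tau>)) \<longlongrightarrow>
      measure_pmf.expectation p (\<Phi>' x)) (at x)"
    unfolding isCont_def by metis
  moreover have "\<forall>\<^sub>F s in at x. measure_pmf.expectation p (\<lambda>\<tau>. Q s \<tau>) =
      (measure_pmf.expectation p (\<Phi> s) - measure_pmf.expectation p (\<Phi> x)) / (s - x)"
    using \<Phi> by (auto simp: eventually_at_filter Q_def integrable_measure_pmf_bounded[of _ C])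
  ultimately show ?thesis
    unfolding has_field_derivative_iff by (rule Lim_transform_eventually)
qed

section \<open>A variance inequality for Poisson variables\<close>

text \<open>Chebyshev's association inequality. The threshold \<open>c\<close> makes the integrand pointwise
  nonnegative.\<close>
lemma expectation_mult_ge_mono:
  fixes p :: "nat pmf" and u v :: "nat \<Rightarrow> real"
  assumes "mono u" "mono v" and v: "\<And>m. \<bar>v m\<bar> \<le> B"
    and u_int: "integrable p u" and uv_int: "integrable p (\<lambda>m. u m * v m)"
  shows "measure_pmf.expectation p u * measure_pmf.expectation p v \<le>
    measure_pmf.expectation p (\<lambda>m. u m * v m)"
proof -
  let ?E = "measure_pmf.expectation p"
  obtain c where c: "\<And>m. 0 \<le> (u m - ?E u) * (v m - c)"
  proof (cases "\<exists>t. ?E u \<le> u t")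
    case True
    define t where "t = (LEAST t. ?E u \<le> u t)"
    have "0 \<le> (u m - ?E u) * (v m - v t)" for m
    proof (cases "m < t")
      case True
      then have "u m < ?E u"
        unfolding t_def using not_less_Least by fastforce
      then show ?thesis
        using True monoD[OF \<open>mono v\<close>, of m t] by (intro mult_nonpos_nonpos) auto
    next
      case False
      have "?E u \<le> u t"
        unfolding t_def using True by (rule LeastI_ex)
      then show ?thesis
        using False monoD[OF \<open>mono u\<close>, of t m] monoD[OF \<open>mono v\<close>, of t m]
        by (intro mult_nonneg_nonneg) auto
    qed
    then show thesis
      by (rule that)
  next
    case False
    have "v m \<le> (SUP k. v k)" for m
      using v by (intro cSUP_upper bdd_aboveI[of _ B]) (auto simp: abs_le_iff)
    then have "0 \<le> (u m - ?E u) * (v m - (SUP k. v k))" for m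
      using False by (intro mult_nonpos_nonpos) (auto simp: not_le less_imp_le)
    then show thesis
      by (rule that)
  qed
  have v_int: "integrable p v"
    using v by (rule integrable_measure_pmf_bounded)
  have "0 \<le> ?E (\<lambda>m. (u m - ?E u) * (v m - c))"
    using c by (intro Bochner_Integration.integral_nonneg) auto
  also have "\<dots> = ?E (\<lambda>m. u m * v m - c * u m - ?E u * v m + ?E u * c)"
    by (simp add: algebra_simps)
  also have "\<dots> = ?E (\<lambda>m. u m * v m) - ?E u * ?E v"
    using u_int v_int uv_int by (simp add: algebra_simps)
  finally show ?thesis
    by simp
qed

lemma summable_pmf_nat: "summable (pmf (p :: nat pmf))"
  using integrable_pmf[of UNIV p] by (simp add: integrable_count_space_nat_iff)

lemma summable_pmf_times_bounded:
  fixes p :: "nat pmf" and f :: "nat \<Rightarrow> real"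
  assumes "\<And>m. \<bar>f m\<bar> \<le> B"
  shows "summable (\<lambda>m. \<bar>pmf p m * f m\<bar>)"
proof (rule summable_comparison_test)
  show "\<exists>N. \<forall>m\<ge>N. norm \<bar>pmf p m * f m\<bar> \<le> B * pmf p m"
    using assms by (auto intro!: exI[of _ 0] mult_left_mono simp: abs_mult mult.commute[of B])
  show "summable (\<lambda>m. B * pmf p m)"
    by (intro summable_mult summable_pmf_nat)
qed

lemma expectation_nat_pmf_eq_suminf:
  fixes p :: "nat pmf" and f :: "nat \<Rightarrow> real"
  assumes "summable (\<lambda>m. \<bar>pmf p m * f m\<bar>)"
  shows "integrable p f" "measure_pmf.expectation p f = (\<Sum>m. pmf p m * f m)"
proof -
  have int: "integrable (count_space UNIV) (\<lambda>m. pmf p m * f m)"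
    using assms by (simp add: integrable_count_space_nat_iff)
  then show "integrable p f"
    by (simp add: measure_pmf_eq_density integrable_density)
  have "measure_pmf.expectation p f = integral\<^sup>L (count_space UNIV) (\<lambda>m. pmf p m * f m)"
    by (simp add: measure_pmf_eq_density integral_density)
  also have "\<dots> = (\<Sum>m. pmf p m * f m)"
    using int by (rule integral_count_space_nat)
  finally show "measure_pmf.expectation p f = (\<Sum>m. pmf p m * f m)" .
qed

lemma pmf_poisson_Suc:
  assumes "0 < r"
  shows "pmf (poisson_pmf r) (Suc m) * real (Suc m) = r * pmf (poisson_pmf r) m"
proof -
  have "pmf (poisson_pmf r) (Suc m) * real (Suc m) =
      r ^ Suc m / (real (Suc m) * fact m) * exp (- r) * real (Suc m)"
    using assms by (simp add: fact_Suc)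
  also have "\<dots> = r * (r ^ m / fact m * exp (- r))"
    by (simp add: field_simps del: of_nat_Suc)
  finally show ?thesis
    using assms by simp
qed

lemma poisson_stein_identity:
  fixes \<phi> :: "nat \<Rightarrow> real"
  assumes "0 < r" and \<phi>: "\<And>m. \<bar>\<phi> m\<bar> \<le> B"
  shows "integrable (poisson_pmf r) (\<lambda>m. real m * \<phi> m)"
    and "measure_pmf.expectation (poisson_pmf r) (\<lambda>m. real m * \<phi> m) =
      r * measure_pmf.expectation (poisson_pmf r) (\<lambda>m. \<phi> (Suc m))"
proof -
  let ?p = "poisson_pmf r"
  let ?a = "\<lambda>m. pmf ?p m * (real m * \<phi> m)"
  have shift: "?a (Suc m) = r * (pmf ?p m * \<phi> (Suc m))" for m
    using pmf_poisson_Suc[OF assms(1), of m] by (simp add: mult_ac)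
  have summable_shifted: "summable (\<lambda>m. \<bar>pmf ?p m * \<phi> (Suc m)\<bar>)"
    using \<phi> by (rule summable_pmf_times_bounded)
  then have "summable (\<lambda>m. \<bar>?a (Suc m)\<bar>)"
    unfolding shift abs_mult[of r] by (rule summable_mult)
  then have summable: "summable (\<lambda>m. \<bar>?a m\<bar>)"
    by (subst summable_Suc_iff[symmetric])
  then show "integrable ?p (\<lambda>m. real m * \<phi> m)"
    by (rule expectation_nat_pmf_eq_suminf)
  have "measure_pmf.expectation ?p (\<lambda>m. real m * \<phi> m) = (\<Sum>m. ?a m)"
    using summable by (rule expectation_nat_pmf_eq_suminf)
  also have "\<dots> = (\<Sum>m. ?a (Suc m))"
    using suminf_split_head[OF summable_rabs_cancel[OF summable]] by simp
  also have "\<dots> = r * (\<Sum>m. pmf ?p m * \<phi> (Suc m))"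
    unfolding shift by (rule suminf_mult) (rule summable_rabs_cancel[OF summable_shifted])
  also have "(\<Sum>m. pmf ?p m * \<phi> (Suc m)) = measure_pmf.expectation ?p (\<lambda>m. \<phi> (Suc m))"
    using expectation_nat_pmf_eq_suminf(2)[OF summable_shifted] by simp
  finally show "measure_pmf.expectation ?p (\<lambda>m. real m * \<phi> m) =
      r * measure_pmf.expectation ?p (\<lambda>m. \<phi> (Suc m))" .
qed

text \<open>Chebyshev's inequality for the comonotone pair \<open>N - g(N)\<close>, \<open>g(N)\<close> gives
  \<open>Var g(N) \<le> Cov(N, g(N))\<close>, and the Stein identity evaluates the covariance.\<close>
theorem poisson_variance_le_increment:
  fixes g :: "nat \<Rightarrow> real"
  assumes "0 < r" and g01: "\<And>m. 0 \<le> g m \<and> g m \<le> 1" and g_mono: "\<And>m. g m \<le> g (Suc m)"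
  shows "measure_pmf.variance (poisson_pmf r) g \<le>
    r * measure_pmf.expectation (poisson_pmf r) (\<lambda>m. g (Suc m) - g m)"
proof -
  let ?p = "poisson_pmf r"
  let ?E = "measure_pmf.expectation ?p"
  have g: "\<bar>g m\<bar> \<le> 1" for m
    using g01[of m] by auto
  have g2: "\<bar>(g m)\<^sup>2\<bar> \<le> 1" for m
    using abs_power2_le[OF g] by simp
  have int_g: "integrable ?p g" "integrable ?p (\<lambda>m. (g m)\<^sup>2)" "integrable ?p (\<lambda>m. g (Suc m))"
    using integrable_measure_pmf_bounded[OF g] integrable_measure_pmf_bounded[OF g2] by auto
  have int_N: "integrable ?p real" and E_N: "?E real = r"
    using poisson_stein_identity[OF assms(1), of "\<lambda>_. 1" 1] by simp_all
  have int_Ng: "integrable ?p (\<lambda>m. real m * g m)" and E_Ng: "?E (\<lambda>m. real m * g m) = r * ?E (\<lambda>m. g (Suc m))"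
    using poisson_stein_identity[OF assms(1) g] by simp_all
  have "mono g"
    using g_mono by (simp add: mono_iff_le_Suc)
  moreover have "mono (\<lambda>m. real m - g m)"
    using g01 by (simp add: mono_iff_le_Suc) (smt (verit))
  ultimately have "?E (\<lambda>m. real m - g m) * ?E g \<le> ?E (\<lambda>m. (real m - g m) * g m)"
    using g int_N int_g int_Ng
    by (intro expectation_mult_ge_mono[where B = 1]) (auto simp: left_diff_distrib power2_eq_square)
  then have "?E (\<lambda>m. (g m)\<^sup>2) - (?E g)\<^sup>2 \<le> ?E (\<lambda>m. real m * g m) - ?E real * ?E g"
    using int_N int_g int_Ng by (simp add: left_diff_distrib power2_eq_square)
  then show ?thesis
    unfolding variance_eq_bounded[OF g] E_N E_Ng using int_g by (simp add: algebra_simps)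
qed

lemma variance_pois_le_increment:
  fixes g :: "nat \<Rightarrow> real"
  assumes "0 \<le> r" "\<And>m. 0 \<le> g m \<and> g m \<le> 1" "\<And>m. g m \<le> g (Suc m)"
  shows "measure_pmf.variance (pois r) g \<le>
    r * measure_pmf.expectation (pois r) (\<lambda>m. g (Suc m) - g m)"
proof (cases "r = 0")
  case False
  then show ?thesis
    using poisson_variance_le_increment[of r g] assms by (simp add: pois_def)
qed (simp add: pois_def)

section \<open>The overlap in a Poisson random field\<close>

lemma power_diff_le_mult:
  fixes x y :: real
  assumes "0 \<le> y" "y \<le> x" "x \<le> 1"
  shows "x ^ m - y ^ m \<le> real m * (x - y)"
proof (induction m)
  case (Suc m)
  have "x * (x ^ m - y ^ m) \<le> 1 * (real m * (x - y))"
    using Suc.IH assms power_mono[of y x m] by (intro mult_mono) auto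
  moreover have "(x - y) * y ^ m \<le> (x - y) * 1"
    using assms by (intro mult_left_mono power_le_one) auto
  moreover have "x ^ Suc m - y ^ Suc m = x * (x ^ m - y ^ m) + (x - y) * y ^ m"
    by (simp add: algebra_simps)
  ultimately show ?case
    by (simp add: algebra_simps)
qed simp

definition tau_field :: "real \<Rightarrow> real \<Rightarrow> (nat \<Rightarrow> nat) \<Rightarrow> nat \<Rightarrow> real"
  where "tau_field h0 h1 \<tau> = (\<lambda>k. h0 + h1 * real (\<tau> k))"

definition total_magnetization :: "nat \<Rightarrow> (nat set \<Rightarrow> real) \<Rightarrow> (nat \<Rightarrow> real) \<Rightarrow> real"
  where "total_magnetization n J b = (\<Sum>j<n. magnetization n J b j)"

lemma overlap_avg_eq: "overlap_avg n k J h0 h1 \<tau> = (\<Sum>j<n. magnetization n J (tau_field h0 h1 \<tau>) j ^ k) / real n"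
  unfolding overlap_avg_def magnetization_def gibbs_eq_gibbs_avg tau_field_def by simp

lemma tau_field_increment:
  "tau_field h0 h1 (\<tau>(i := Suc (\<tau> i))) k = tau_field h0 h1 \<tau> k + (if k = i then h1 else 0)"
  unfolding tau_field_def by (simp add: algebra_simps)

lemma has_real_derivative_ln_partition_fn_tau_field:
  "((\<lambda>h. ln (partition_fn n J (tau_field h h1 \<tau>))) has_real_derivative
    total_magnetization n J (tau_field h h1 \<tau>)) (at h)"
proof -
  have "tau_field h h1 \<tau> = field_line (\<lambda>k. h1 * real (\<tau> k)) (\<lambda>_. 1) h" for h
    by (simp add: tau_field_def field_line_def fun_eq_iff)
  then show ?thesis
    using has_real_derivative_ln_partition_fn_field_line[of n J "\<lambda>k. h1 * real (\<tau> k)" "\<lambda>_. 1" h]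
    by (simp add: total_magnetization_def)
qed

definition ln_partition_increment ::
  "nat \<Rightarrow> (nat set \<Rightarrow> real) \<Rightarrow> real \<Rightarrow> real \<Rightarrow> nat \<Rightarrow> (nat \<Rightarrow> nat) \<Rightarrow> real"
  where "ln_partition_increment n J h0 h1 i \<tau> =
    ln (partition_fn n J (tau_field h0 h1 (\<tau>(i := Suc (\<tau> i))))) - ln (partition_fn n J (tau_field h0 h1 \<tau>))"

definition magnetization_increment ::
  "nat \<Rightarrow> (nat set \<Rightarrow> real) \<Rightarrow> real \<Rightarrow> real \<Rightarrow> nat \<Rightarrow> (nat \<Rightarrow> nat) \<Rightarrow> real"
  where "magnetization_increment n J h0 h1 i \<tau> =
    total_magnetization n J (tau_field h0 h1 (\<tau>(i := Suc (\<tau> i)))) - total_magnetization n J (tau_field h0 h1 \<tau>)"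

lemma abs_total_magnetization_le: "\<bar>total_magnetization n J b\<bar> \<le> real n"
proof -
  have "\<bar>total_magnetization n J b\<bar> \<le> (\<Sum>j<n. \<bar>magnetization n J b j\<bar>)"
    unfolding total_magnetization_def by (rule sum_abs)
  also have "\<dots> \<le> (\<Sum>j<n. 1)"
    using abs_magnetization_le by (intro sum_mono) auto
  finally show ?thesis
    by simp
qed

lemma abs_magnetization_increment_le: "\<bar>magnetization_increment n J h0 h1 i \<tau>\<bar> \<le> 2 * real n"
  unfolding magnetization_increment_def
  using abs_total_magnetization_le[of n J "tau_field h0 h1 \<tau>"]
    abs_total_magnetization_le[of n J "tau_field h0 h1 (\<tau>(i := Suc (\<tau> i)))"]
  by linarith

lemma abs_ln_partition_increment_le:
  assumes "i < n" "0 \<le> h1"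
  shows "\<bar>ln_partition_increment n J h0 h1 i \<tau>\<bar> \<le> h1"
proof -
  have "\<bar>ln_partition_increment n J h0 h1 i \<tau>\<bar>
      \<le> (\<Sum>l<n. \<bar>tau_field h0 h1 (\<tau>(i := Suc (\<tau> i))) l - tau_field h0 h1 \<tau> l\<bar>)"
    unfolding ln_partition_increment_def by (rule abs_ln_partition_fn_diff_le)
  also have "\<dots> = (\<Sum>l<n. if l = i then h1 else 0)"
    using assms(2) by (intro sum.cong) (auto simp: tau_field_increment)
  finally show ?thesis
    using assms(1) by simp
qed

lemma has_real_derivative_ln_partition_increment:
  "((\<lambda>h. ln_partition_increment n J h h1 i \<tau>) has_real_derivative
    magnetization_increment n J h h1 i \<tau>) (at h)"
  unfolding ln_partition_increment_def magnetization_increment_def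
  by (intro DERIV_diff has_real_derivative_ln_partition_fn_tau_field)

lemma has_real_derivative_expectation_ln_partition_increment:
  assumes "i < n" "0 \<le> h1"
  shows "((\<lambda>h. measure_pmf.expectation p (ln_partition_increment n J h h1 i)) has_real_derivative
    measure_pmf.expectation p (magnetization_increment n J h h1 i)) (at h)"
  using has_real_derivative_ln_partition_increment abs_magnetization_increment_le
    abs_ln_partition_increment_le[OF assms]
  by (rule has_real_derivative_expectation)

context
  fixes n k :: nat and J :: "nat set \<Rightarrow> real" and h h1 :: real
  assumes J: "\<And>X. X \<subseteq> {0..<n} \<Longrightarrow> 0 \<le> J X" and h: "0 \<le> h" and h1: "0 \<le> h1"
begin

lemma tau_field_nonneg: "0 \<le> tau_field h h1 \<tau> l"
  unfolding tau_field_def using h h1 by simp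

lemma magnetization_tau_field_unit_interval:
  assumes "j < n"
  shows "0 \<le> magnetization n J (tau_field h h1 \<tau>) j \<and> magnetization n J (tau_field h h1 \<tau>) j \<le> 1"
  using magnetization_nonneg[where b = "tau_field h h1 \<tau>", OF J tau_field_nonneg assms]
    abs_magnetization_le[OF assms, of J "tau_field h h1 \<tau>"]
  by (auto simp: abs_le_iff)

lemma magnetization_tau_field_mono:
  assumes "j < n"
  shows "magnetization n J (tau_field h h1 \<tau>) j \<le>
    magnetization n J (tau_field h h1 (\<tau>(i := Suc (\<tau> i)))) j"
proof (rule magnetization_mono[where b = "tau_field h h1 \<tau>", OF J tau_field_nonneg _ assms])
  show "tau_field h h1 \<tau> l \<le> tau_field h h1 (\<tau>(i := Suc (\<tau> i))) l" for l
    using h1 by (simp add: tau_field_def algebra_simps)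
qed

lemma overlap_avg_unit_interval:
  assumes "1 \<le> n"
  shows "0 \<le> overlap_avg n k J h h1 \<tau> \<and> overlap_avg n k J h h1 \<tau> \<le> 1"
proof -
  have "0 \<le> (\<Sum>j<n. magnetization n J (tau_field h h1 \<tau>) j ^ k)"
    using magnetization_tau_field_unit_interval by (intro sum_nonneg zero_le_power) auto
  moreover have "(\<Sum>j<n. magnetization n J (tau_field h h1 \<tau>) j ^ k) \<le> (\<Sum>j<n. 1)"
    using magnetization_tau_field_unit_interval by (intro sum_mono power_le_one) auto
  ultimately show ?thesis
    unfolding overlap_avg_eq using assms by (simp add: divide_le_eq)
qed

lemma overlap_avg_increment:
  assumes "i < n"
  shows "0 \<le> overlap_avg n k J h h1 (\<tau>(i := Suc (\<tau> i))) - overlap_avg n k J h h1 \<tau>"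
    and "overlap_avg n k J h h1 (\<tau>(i := Suc (\<tau> i))) - overlap_avg n k J h h1 \<tau> \<le>
      real k / real n * (total_magnetization n J (tau_field h h1 (\<tau>(i := Suc (\<tau> i))))
        - total_magnetization n J (tau_field h h1 \<tau>))"
proof -
  let ?m = "\<lambda>j. magnetization n J (tau_field h h1 \<tau>) j"
  let ?m' = "\<lambda>j. magnetization n J (tau_field h h1 (\<tau>(i := Suc (\<tau> i)))) j"
  have diff: "overlap_avg n k J h h1 (\<tau>(i := Suc (\<tau> i))) - overlap_avg n k J h h1 \<tau> =
      (\<Sum>j<n. ?m' j ^ k - ?m j ^ k) / real n"
    unfolding overlap_avg_eq by (simp add: sum_subtractf diff_divide_distrib)
  have m: "0 \<le> ?m j" "?m j \<le> ?m' j" "?m' j \<le> 1" if "j < n" for j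
    using that assms magnetization_tau_field_unit_interval magnetization_tau_field_mono by auto
  then show "0 \<le> overlap_avg n k J h h1 (\<tau>(i := Suc (\<tau> i))) - overlap_avg n k J h h1 \<tau>"
    unfolding diff by (auto intro!: divide_nonneg_nonneg sum_nonneg simp: power_mono)
  have "(\<Sum>j<n. ?m' j ^ k - ?m j ^ k) \<le> (\<Sum>j<n. real k * (?m' j - ?m j))"
    using m by (intro sum_mono power_diff_le_mult) auto
  then show "overlap_avg n k J h h1 (\<tau>(i := Suc (\<tau> i))) - overlap_avg n k J h h1 \<tau> \<le>
      real k / real n * (total_magnetization n J (tau_field h h1 (\<tau>(i := Suc (\<tau> i))))
        - total_magnetization n J (tau_field h h1 \<tau>))"
    unfolding diff total_magnetization_def
    by (simp add: divide_right_mono sum_subtractf sum_distrib_left[symmetric])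
qed

lemma ln_partition_increment_nonneg: "0 \<le> ln_partition_increment n J h h1 i \<tau>"
proof -
  have "ln (partition_fn n J (tau_field h h1 \<tau>)) \<le> ln (partition_fn n J (tau_field h h1 (\<tau>(i := Suc (\<tau> i)))))"
  proof (rule ln_partition_fn_mono[where b = "tau_field h h1 \<tau>", OF J tau_field_nonneg])
    show "tau_field h h1 \<tau> l \<le> tau_field h h1 (\<tau>(i := Suc (\<tau> i))) l" for l
      using h1 by (simp add: tau_field_def algebra_simps)
  qed
  then show ?thesis
    unfolding ln_partition_increment_def by simp
qed

lemma expectation_ln_partition_increment_diff_le:
  assumes "i < n"
  shows "measure_pmf.expectation p (ln_partition_increment n J h' h1 i)
    - measure_pmf.expectation p (ln_partition_increment n J h h1 i) \<le> h1"
proof -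
  have "measure_pmf.expectation p (ln_partition_increment n J h' h1 i) \<le> h1"
    using abs_expectation_le[where f = "ln_partition_increment n J h' h1 i" and p = p]
      abs_ln_partition_increment_le[OF assms h1] by (simp add: abs_le_iff)
  moreover have "0 \<le> measure_pmf.expectation p (ln_partition_increment n J h h1 i)"
    using ln_partition_increment_nonneg by (intro Bochner_Integration.integral_nonneg) auto
  ultimately show ?thesis
    by linarith
qed

lemma variance_overlap_avg_le:
  assumes "1 \<le> n" "0 \<le> lam"
  shows "measure_pmf.variance (Pi_pmf {0..<n} 0 (\<lambda>_. pois lam)) (overlap_avg n k J h h1) \<le>
    lam * (real k / real n) *
      (\<Sum>i\<in>{0..<n}. measure_pmf.expectation (Pi_pmf {0..<n} 0 (\<lambda>_. pois lam))
        (magnetization_increment n J h h1 i))"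
proof -
  let ?P = "Pi_pmf {0..<n} 0 (\<lambda>_. pois lam)"
  let ?F = "overlap_avg n k J h h1"
  have "measure_pmf.variance ?P ?F \<le>
      lam * (\<Sum>i\<in>{0..<n}. measure_pmf.expectation ?P (\<lambda>\<tau>. ?F (\<tau>(i := Suc (\<tau> i))) - ?F \<tau>))"
    using variance_pois_le_increment[OF assms(2)] overlap_avg_unit_interval[OF assms(1)]
      overlap_avg_increment(1)
    by (intro variance_Pi_pmf_le_increments) auto
  also have "\<dots> \<le> lam * (\<Sum>i\<in>{0..<n}. measure_pmf.expectation ?P
      (\<lambda>\<tau>. real k / real n * magnetization_increment n J h h1 i \<tau>))"
  proof (intro mult_left_mono[OF _ assms(2)] sum_mono expectation_mono_bounded[where B = "1 + 2 * real k"])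
    fix i \<tau> assume "i \<in> {0..<n}"
    then show "?F (\<tau>(i := Suc (\<tau> i))) - ?F \<tau> \<le> real k / real n * magnetization_increment n J h h1 i \<tau>"
      using overlap_avg_increment(2) by (simp add: magnetization_increment_def)
    show "\<bar>?F (\<tau>(i := Suc (\<tau> i))) - ?F \<tau>\<bar> \<le> 1 + 2 * real k"
      using overlap_avg_unit_interval[OF assms(1), of \<tau>]
        overlap_avg_unit_interval[OF assms(1), of "\<tau>(i := Suc (\<tau> i))"] by auto
    have "\<bar>real k / real n * magnetization_increment n J h h1 i \<tau>\<bar> =
        real k / real n * \<bar>magnetization_increment n J h h1 i \<tau>\<bar>"
      by (simp add: abs_mult)
    also have "\<dots> \<le> real k / real n * (2 * real n)"
      by (intro mult_left_mono abs_magnetization_increment_le) auto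
    finally show "\<bar>real k / real n * magnetization_increment n J h h1 i \<tau>\<bar> \<le> 1 + 2 * real k"
      using assms(1) by simp
  qed
  also have "\<dots> = lam * (real k / real n) *
      (\<Sum>i\<in>{0..<n}. measure_pmf.expectation ?P (magnetization_increment n J h h1 i))"
    by (simp add: sum_distrib_left mult_ac)
  finally show ?thesis .
qed

end

theorem integral_variance_overlap_avg_le:
  fixes n k :: nat and J :: "nat set \<Rightarrow> real" and h1 lam hl hu :: real
  assumes "1 \<le> n" "0 \<le> h1" "0 \<le> lam" "0 < hl" "hl \<le> hu"
    and J: "\<And>X. X \<subseteq> {0..<n} \<Longrightarrow> 0 \<le> J X"
  defines "P \<equiv> Pi_pmf {0..<n} 0 (\<lambda>_. pois lam)"
  shows "integral {hl..hu} (\<lambda>h. measure_pmf.variance P (overlap_avg n k J h h1)) \<le> lam * real k * h1"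
proof -
  define \<Psi> where "\<Psi> h = lam * (real k / real n) *
    (\<Sum>i\<in>{0..<n}. measure_pmf.expectation P (ln_partition_increment n J h h1 i))" for h
  define \<Psi>' where "\<Psi>' h = lam * (real k / real n) *
    (\<Sum>i\<in>{0..<n}. measure_pmf.expectation P (magnetization_increment n J h h1 i))" for h
  have "(\<Psi> has_real_derivative \<Psi>' h) (at h)" for h
    unfolding \<Psi>_def \<Psi>'_def using assms(2)
    by (intro DERIV_cmult DERIV_sum has_real_derivative_expectation_ln_partition_increment) auto
  then have FTC: "(\<Psi>' has_integral \<Psi> hu - \<Psi> hl) {hl..hu}"
    using assms(5)
    by (intro fundamental_theorem_of_calculus)
      (auto simp: has_real_derivative_iff_has_vector_derivative intro: has_vector_derivative_at_within)
  have "measure_pmf.expectation P (ln_partition_increment n J hu h1 i)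
      - measure_pmf.expectation P (ln_partition_increment n J hl h1 i) \<le> h1" if "i < n" for i
    using assms(2,4) that by (intro expectation_ln_partition_increment_diff_le[OF J]) auto
  then have "\<Psi> hu - \<Psi> hl \<le> lam * (real k / real n) * (\<Sum>i\<in>{0..<n}. h1)"
    unfolding \<Psi>_def right_diff_distrib[symmetric] sum_subtractf[symmetric] using assms(3)
    by (intro mult_left_mono sum_mono) auto
  also have "\<dots> = lam * real k * h1"
    using assms(1) by simp
  finally have \<Psi>_bound: "\<Psi> hu - \<Psi> hl \<le> lam * real k * h1" .
  have "measure_pmf.variance P (overlap_avg n k J h h1) \<le> \<Psi>' h" if "h \<in> {hl..hu}" for h
    unfolding \<Psi>'_def P_def using that assms(1-4)
    by (intro variance_overlap_avg_le[OF J]) auto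
  then have "integral {hl..hu} (\<lambda>h. measure_pmf.variance P (overlap_avg n k J h h1)) \<le> \<Psi> hu - \<Psi> hl"
    if "(\<lambda>h. measure_pmf.variance P (overlap_avg n k J h h1)) integrable_on {hl..hu}"
    using integral_le[OF that has_integral_integrable[OF FTC]] integral_unique[OF FTC] by simp
  then show ?thesis
    \<comment> \<open>a non-integrable integrand has integral \<open>0\<close>\<close>
    using \<Psi>_bound not_integrable_integral assms(2,3) by fastforce
qed

theorem lemma3p3:
  fixes n k :: nat and \<theta> h1 \<alpha> hl hu :: real and J :: "nat set \<Rightarrow> real"
  assumes "n \<ge> 1"
    and "1/2 < \<theta>" "\<theta> \<le> 7/8"
    and "0 \<le> h1" "h1 \<le> 1"
    and "0 \<le> \<alpha>" "\<alpha> \<le> 1"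
    and "k \<ge> 1"
    and "0 < hl" "hl \<le> hu" "hu < 1"
    and "\<And>X. J X \<ge> 0"
  shows "integral {hl..hu} (\<lambda>h0. E_tau n \<alpha> \<theta> (\<lambda>\<tau>.
            (overlap_avg n k J h0 h1 \<tau> - E_tau n \<alpha> \<theta> (\<lambda>\<tau>'. overlap_avg n k J h0 h1 \<tau>'))\<^sup>2))
         \<le> \<alpha> * real k * h1 / real n powr (1 - \<theta>)"
proof -
  \<comment> \<open>Only \<open>n \<ge> 1\<close>, \<open>0 \<le> h1\<close>, \<open>0 \<le> \<alpha>\<close>, \<open>0 < hl \<le> hu\<close> and \<open>J \<ge> 0\<close> are needed.\<close>
  let ?lam = "\<alpha> * real n powr (\<theta> - 1)"
  have "real n powr (\<theta> - 1) = 1 / real n powr (1 - \<theta>)"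
    by (simp add: powr_minus_divide[symmetric])
  then have "\<alpha> * real k * h1 / real n powr (1 - \<theta>) = ?lam * real k * h1"
    by simp
  moreover have "0 \<le> ?lam"
    using assms(6) by simp
  ultimately show ?thesis
    unfolding E_tau_def tau_law_def
    using integral_variance_overlap_avg_le[of n h1 ?lam hl hu J k] assms by simp
qed

end
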